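(* For $m,n\in\mathbb{N}$, let $$G_{m,n}=\sum_{k=0}^{n-1}\frac{1}{(2k+1)(2k+2)\cdots(2k+m)}.$$ Then $$G_{m,n}=\sum_{k=1}^n\frac{(-1)^{k-1}}{(m-1)!\,(m+k-1)}\binom{n}{k}\,{}_2F_1(1,1-k;m+k;-1).$$
   Context: $\mathbb{N}$ is the set of positive integers. For complex $a_1,\ldots,a_{s+1},b_1,\ldots,b_s$ with no $b_i$ zero or a negative integer, the generalized hypergeometric function is ${}_{s+1}F_s(a_1,\ldots,a_{s+1};b_1,\ldots,b_s;x)=\sum_{i\geq 0}\frac{(a_1)_i\cdots(a_{s+1})_i}{(b_1)_i\cdots(b_s)_i}\frac{x^i}{i!}$, where $(a)_0=1$ and $(a)_i=a(a+1)\cdots(a+i-1)$ for $i>0$. (When some $a_j$ is a nonpositive integer the series is a finite sum.) *)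

theory Defs
  imports Complex_Main
begin

definition hyp2F1 :: "real \<Rightarrow> real \<Rightarrow> real \<Rightarrow> real \<Rightarrow> real" where
  "hyp2F1 a b c x = (\<Sum>i. pochhammer a i * pochhammer b i / (pochhammer c i * fact i) * x ^ i)"

definition G :: "nat \<Rightarrow> nat \<Rightarrow> real" where
  "G m n = (\<Sum>k<n. 1 / (\<Prod>j=1..m. real (2*k + j)))"

end

theory Submission
  imports Defs "HOL-Computational_Algebra.Polynomial"
begin

(*
  With x ranging over [0,1], the Beta integral gives
    1/((2k+1)...(2k+m)) = 1/(m-1)! * integral x^(2k) (1-x)^(m-1) dx,
  so (m-1)! G_{m,n} is the integral of (sum_{k<n} x^(2k)) (1-x)^(m-1).
  Put y = x^2 - 1 = -(1-x)(1+x); then sum_{k<n} (1+y)^k = sum_{k<n} C(n,k+1) y^k,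
  and integrating by parts in k shows
    integral (1-x)^a (1+x)^k dx = 2F1(1,-k;a+2;-1) / (a+1),
  which turns the summand with y^k into the (k+1)-st term of the right-hand side.
  All integrands are polynomials, so the integral over [0,1] is taken formally.
*)

definition integral01 :: "real poly \<Rightarrow> real" where
  "integral01 p = (\<Sum>i\<le>degree p. coeff p i / (real i + 1))"

lemma integral01_eq_sum: "degree p \<le> N \<Longrightarrow> integral01 p = (\<Sum>i\<le>N. coeff p i / (real i + 1))"
  unfolding integral01_def by (rule sum.mono_neutral_left) (auto simp: coeff_eq_0)

lemma integral01_add: "integral01 (p + q) = integral01 p + integral01 q"
proof -
  have "degree (p + q) \<le> max (degree p) (degree q)"
    by (rule degree_add_le) auto
  then show ?thesis
    by (simp add: integral01_eq_sum[of _ "max (degree p) (degree q)"] sum.distrib add_divide_distrib)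
qed

lemma integral01_smult: "integral01 (smult c p) = c * integral01 p"
  using degree_smult_le[of c p]
  by (simp add: integral01_eq_sum[of _ "degree p"] integral01_def sum_distrib_left)

lemma integral01_minus: "integral01 (- p) = - integral01 p"
  using integral01_smult[of "-1" p] by simp

lemma integral01_sum: "integral01 (\<Sum>k\<in>A. f k) = (\<Sum>k\<in>A. integral01 (f k))"
proof (induction A rule: infinite_finite_induct)
  case (insert x F)
  then show ?case by (simp add: integral01_add)
qed (simp_all add: integral01_def)

lemma integral01_monom: "integral01 (monom c a) = c / (real a + 1)"
  by (simp add: integral01_eq_sum[OF degree_monom_le] if_distrib[where f="\<lambda>x. x / _"] cong: if_cong)

lemma integral01_pderiv: "integral01 (pderiv p) = poly p 1 - poly p 0"
proof -
  have "integral01 (pderiv p) = (\<Sum>i\<le>degree p. coeff p (Suc i))"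
    by (simp add: integral01_eq_sum[of _ "degree p"] degree_pderiv coeff_pderiv add.commute)
  also have "\<dots> = (\<Sum>i\<le>Suc (degree p). coeff p i) - coeff p 0"
    using sum.atMost_Suc_shift[of "coeff p" "degree p"] by simp
  also have "(\<Sum>i\<le>Suc (degree p). coeff p i) = poly p 1"
    by (simp add: poly_altdef coeff_eq_0)
  finally show ?thesis
    by (simp add: poly_0_coeff_0)
qed

lemma integral01_by_parts:
  "integral01 (pderiv p * q) = poly p 1 * poly q 1 - poly p 0 * poly q 0 - integral01 (p * pderiv q)"
  using integral01_pderiv[of "p * q"] by (simp add: pderiv_mult integral01_add mult.commute)

lemma pderiv_one_minus_power:
  "pderiv ([:1, -1:]^Suc b) = smult (- real (Suc b)) ([:1, -1:]^b :: real poly)"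
  by (simp add: pderiv_power_Suc pderiv_pCons del: power_Suc of_nat_Suc)

lemma integral01_Beta:
  "integral01 (monom 1 a * [:1, -1:]^b) = fact b / pochhammer (real a + 1) (Suc b)"
proof (induction b arbitrary: a)
  case 0
  show ?case by (simp add: integral01_monom)
next
  case (Suc b)
  define p where "p = smult (1 / (real a + 1)) (monom 1 (Suc a))"
  have "pderiv p = monom 1 a"
    by (simp add: p_def pderiv_smult pderiv_monom smult_monom add.commute)
  then have "integral01 (monom 1 a * [:1, -1:]^Suc b) = integral01 (pderiv p * [:1, -1:]^Suc b)"
    by simp
  also have "\<dots> = - integral01 (p * pderiv ([:1, -1:]^Suc b))"
    by (simp add: integral01_by_parts p_def poly_monom)
  also have "\<dots> = real (Suc b) / (real a + 1) * integral01 (monom 1 (Suc a) * [:1, -1:]^b)"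
    by (simp add: p_def pderiv_one_minus_power integral01_smult integral01_minus del: power_Suc of_nat_Suc)
  also have "\<dots> = fact (Suc b) / pochhammer (real a + 1) (Suc (Suc b))"
  proof -
    have "pochhammer (real a + 1) (Suc (Suc b)) = (real a + 1) * pochhammer (real (Suc a) + 1) (Suc b)"
      by (simp only: pochhammer_rec) (simp add: add_ac)
    then show ?thesis
      by (simp add: Suc.IH)
  qed
  finally show ?case .
qed

lemma hyp2F1_one_neg_nat:
  "hyp2F1 1 (- real k) c x = (\<Sum>i\<le>k. pochhammer (- real k) i / pochhammer c i * x^i)"
proof -
  have "hyp2F1 1 (- real k) c x = (\<Sum>i. pochhammer (- real k) i / pochhammer c i * x^i)"
    by (simp add: hyp2F1_def flip: pochhammer_fact)
  also have "\<dots> = (\<Sum>i\<le>k. pochhammer (- real k) i / pochhammer c i * x^i)"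
    by (rule suminf_finite) (auto simp: pochhammer_of_nat_eq_0_iff)
  finally show ?thesis .
qed

lemma hyp2F1_one_neg_Suc:
  "hyp2F1 1 (- real (Suc k)) c x = 1 - real (Suc k) * x / c * hyp2F1 1 (- real k) (c + 1) x"
proof -
  define t where "t n i = pochhammer (- real n) i / pochhammer c i * x^i" for n i
  have t_Suc: "t (Suc k) (Suc i)
      = - (real (Suc k) * x / c * (pochhammer (- real k) i / pochhammer (c + 1) i * x^i))" for i
    by (simp add: t_def pochhammer_rec del: of_nat_Suc) (simp add: field_simps)
  have "hyp2F1 1 (- real (Suc k)) c x = (\<Sum>i\<le>Suc k. t (Suc k) i)"
    by (simp only: hyp2F1_one_neg_nat t_def)
  also have "\<dots> = 1 + (\<Sum>i\<le>k. t (Suc k) (Suc i))"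
    by (simp only: sum.atMost_Suc_shift) (simp add: t_def)
  finally show ?thesis
    by (simp only: t_Suc sum_negf hyp2F1_one_neg_nat sum_distrib_left diff_conv_add_uminus)
qed

lemma integral01_hyp2F1:
  "integral01 ([:1, -1:]^a * [:1, 1:]^k) = hyp2F1 1 (- real k) (real a + 2) (-1) / (real a + 1)"
proof (induction k arbitrary: a)
  case 0
  have "integral01 ([:1, -1:]^a) = 1 / (real a + 1)"
    using integral01_Beta[of 0 a] by (simp flip: pochhammer_fact)
  then show ?case
    using hyp2F1_one_neg_nat[of 0] by simp
next
  case (Suc k)
  have IH: "integral01 ([:1, -1:]^Suc a * [:1, 1:]^k) = hyp2F1 1 (- real k) (real a + 3) (-1) / (real a + 2)"
    using Suc.IH[of "Suc a"] by (simp add: add_ac)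
  define p where "p = smult (- 1 / (real a + 1)) ([:1, -1:]^Suc a)"
  have "- 1 / (real a + 1) * - real (Suc a) = 1"
    by (simp add: field_simps)
  then have "pderiv p = [:1, -1:]^a"
    by (simp only: p_def pderiv_smult pderiv_one_minus_power smult_smult smult_1_left)
  moreover have "pderiv ([:1, 1:]^Suc k) = smult (real (Suc k)) ([:1, 1:]^k :: real poly)"
    by (simp add: pderiv_power_Suc pderiv_pCons del: power_Suc of_nat_Suc)
  ultimately have "integral01 ([:1, -1:]^a * [:1, 1:]^Suc k)
      = 1 / (real a + 1) + real (Suc k) / (real a + 1) * integral01 ([:1, -1:]^Suc a * [:1, 1:]^k)"
    using integral01_by_parts[of p "[:1, 1:]^Suc k"]
    by (simp add: p_def integral01_smult integral01_minus mult.assoc del: power_Suc of_nat_Suc)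
  also have "\<dots> = (1 + real (Suc k) / (real a + 2) * hyp2F1 1 (- real k) (real a + 3) (-1)) / (real a + 1)"
    by (simp only: IH) (simp add: add_divide_distrib del: of_nat_Suc)
  also have "\<dots> = hyp2F1 1 (- real (Suc k)) (real a + 2) (-1) / (real a + 1)"
    by (simp add: hyp2F1_one_neg_Suc add.commute del: of_nat_Suc)
  finally show ?case .
qed

lemma pochhammer_of_nat_plus_one:
  "pochhammer (real c + 1) m = (\<Prod>j=1..m. real (c + j))"
  by (induction m) (simp_all add: pochhammer_Suc prod.nat_ivl_Suc' add_ac)

lemma G_Suc_eq_integral01:
  "fact m * G (Suc m) n = integral01 ((\<Sum>k<n. monom 1 (2 * k)) * [:1, -1:]^m)"
proof -
  have "fact m * (1 / (\<Prod>j=1..Suc m. real (2 * k + j))) = integral01 (monom 1 (2 * k) * [:1, -1:]^m)" for k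
    unfolding integral01_Beta pochhammer_of_nat_plus_one by simp
  then show ?thesis
    by (simp add: G_def sum_distrib_left sum_distrib_right integral01_sum)
qed

lemma sum_hyp2F1_eq_integral01:
  "fact m * (\<Sum>k=1..n. (-1)^(k - 1) / (fact m * real (Suc m + k - 1)) * real (n choose k)
                         * hyp2F1 1 (1 - real k) (real (Suc m + k)) (-1))
   = integral01 ((\<Sum>k<n. of_nat (n choose Suc k) * [:-1, 0, 1:]^k) * [:1, -1:]^m)"
proof -
  have term_eq: "fact m * ((-1)^(Suc k - 1) / (fact m * real (Suc m + Suc k - 1)) * real (n choose Suc k)
                  * hyp2F1 1 (1 - real (Suc k)) (real (Suc m + Suc k)) (-1))
      = integral01 (of_nat (n choose Suc k) * [:-1, 0, 1:]^k * [:1, -1:]^m)" for k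
  proof -
    have factor: "[:-1, 0, 1:] = smult (-1) ([:1, -1:] * [:1, 1:] :: real poly)"
      by simp
    have "[:-1, 0, 1:]^k * [:1, -1:]^m = smult ((-1)^k) ([:1, -1:]^(m + k) * [:1, 1:]^k :: real poly)"
      by (simp only: factor smult_power power_mult_distrib) (simp add: power_add mult_ac)
    then show ?thesis
      by (simp add: of_nat_poly mult.assoc integral01_smult integral01_hyp2F1 add_ac)
  qed
  have shift: "(\<Sum>k=1..n. g k) = (\<Sum>k<n. g (Suc k))" for g :: "nat \<Rightarrow> real"
    using sum.atLeast1_atMost_eq[of g n] by simp
  show ?thesis
    by (simp only: sum_distrib_left shift term_eq sum_distrib_right integral01_sum)
qed

lemma sum_one_plus_power_eq_sum_choose:
  fixes y :: "'a::comm_semiring_1"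
  shows "(\<Sum>k<n. (1 + y)^k) = (\<Sum>k<n. of_nat (n choose Suc k) * y^k)"
proof (induction n)
  case (Suc n)
  have "(\<Sum>k<Suc n. of_nat (Suc n choose Suc k) * y^k)
      = (\<Sum>k<Suc n. of_nat (n choose Suc k) * y^k) + (\<Sum>k<Suc n. of_nat (n choose k) * y^k)"
    by (simp add: sum.distrib distrib_right add.commute del: sum.lessThan_Suc)
  also have "(\<Sum>k<Suc n. of_nat (n choose k) * y^k) = (1 + y)^n"
    using binomial_ring[of y 1 n] by (simp add: lessThan_Suc_atMost add.commute)
  finally show ?case
    using Suc.IH by (simp add: binomial_eq_0)
qed simp

lemma sum_monom_even_eq_sum_choose:
  "(\<Sum>k<n. monom 1 (2 * k)) = (\<Sum>k<n. of_nat (n choose Suc k) * [:-1, 0, 1:]^k :: real poly)"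
proof -
  have "1 + [:-1, 0, 1:] = (monom 1 2 :: real poly)"
    by (simp add: monom_altdef numeral_2_eq_2 one_pCons)
  then show ?thesis
    using sum_one_plus_power_eq_sum_choose[of "[:-1, 0, 1:] :: real poly" n]
    by (simp add: monom_power mult.commute)
qed

theorem proposition3p5:
  fixes m n :: nat
  assumes "m \<ge> 1" and "n \<ge> 1"
  shows "G m n = (\<Sum>k=1..n. (-1) ^ (k - 1) / (fact (m - 1) * real (m + k - 1))
                   * real (n choose k) * hyp2F1 1 (1 - real k) (real (m + k)) (-1))"
proof -
  \<comment> \<open>The identity also holds for \<open>n = 0\<close>.\<close>
  obtain m' where m: "m = Suc m'"
    using assms(1) by (cases m) auto
  have "fact m' * G m n = integral01 ((\<Sum>k<n. of_nat (n choose Suc k) * [:-1, 0, 1:]^k) * [:1, -1:]^m')"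
    unfolding m G_Suc_eq_integral01 sum_monom_even_eq_sum_choose ..
  also have "\<dots> = fact m' * (\<Sum>k=1..n. (-1) ^ (k - 1) / (fact (m - 1) * real (m + k - 1))
                   * real (n choose k) * hyp2F1 1 (1 - real k) (real (m + k)) (-1))"
    using sum_hyp2F1_eq_integral01[of m' n] by (simp add: m)
  finally show ?thesis
    by simp
qed

end
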